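(* Let $(\sigma,\rho)$ and $(\nu,\varrho)$ be two $G$-compatible pairs. The lattices $L_{(\sigma,\rho)}=\sigma^{-1}\mathbb Z^n\rtimes_\eta\rho\mathbb Z^m$ and $L_{(\nu,\varrho)}=\nu^{-1}\mathbb Z^n\rtimes_\eta\varrho\mathbb Z^m$ are commensurable if and only if $$\left(\mathrm{rank}_{\mathbb Z}(\sigma^{-1}\mathbb Z^n\cap\nu^{-1}\mathbb Z^n),\ \mathrm{rank}_{\mathbb Z}(\rho\mathbb Z^m\cap\varrho\mathbb Z^m)\right)=(n,m).$$
   Context: Fix integers $1\le m\le n$. Let $\Delta_1,\dots,\Delta_m\in\mathbb R^{n\times n}$ be linearly independent, nonsingular, traceless diagonal matrices $\Delta_i=\mathrm{diag}(d_1^{(i)},\dots,d_n^{(i)})$ such that for each $i$, $d_k^{(i)}\neq d_j^{(i)}$ whenever $k\neq j$. For $t=(t_1,\dots,t_m)^T\in\mathbb R^m$ write $t\cdot\Delta=\sum_{i=1}^m t_i\Delta_i$ and $\eta(t)=e^{t\cdot\Delta}$. Let $G=\mathbb R^n\rtimes_\eta\mathbb R^m$ be the Lie group with underlying set $\mathbb R^n\times\mathbb R^m$ and multiplication $(x,t)(y,s)=(x+e^{t\cdot\Delta}y,\ t+s)$. A pair $(\sigma,\rho)\in GL_n(\mathbb R)\times GL_m(\mathbb R)$ is called $G$-compatible if $\sigma\exp(\rho^{(j)}\cdot\Delta)\sigma^{-1}\in SL_n(\mathbb Z)$ for all $j=1,\dots,m$, where $\rho^{(j)}$ is the $j$-th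 column of $\rho$. For such a pair, $\sigma^{-1}\mathbb Z^n\rtimes_\eta\rho\mathbb Z^m$ denotes the subgroup $\{(\sigma^{-1}v,\rho p): v\in\mathbb Z^n, p\in\mathbb Z^m\}$ of $G$, which is a lattice. Two lattices $\Gamma,\Gamma'$ in $G$ are commensurable if $[\Gamma:\Gamma\cap\Gamma']<\infty$ and $[\Gamma':\Gamma\cap\Gamma']<\infty$. *)

theory Defs
  imports "HOL-Analysis.Analysis"
begin

text \<open>The traceless diagonal matrices Delta_1..Delta_m are given by their diagonals
  d i :: real^'n (i :: 'm).  eta d t = e^{t.Delta} is the diagonal matrix with entries
  exp (sum_i t_i d_k^(i)), i.e. the matrix exponential of the diagonal matrix t.Delta.\<close>

definition eta :: "('m::finite \<Rightarrow> real^'n::finite) \<Rightarrow> real^'m \<Rightarrow> real^'n^'n" where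
  "eta d t = (\<chi> k l. if k = l then exp (\<Sum>i\<in>UNIV. t $ i * d i $ k) else 0)"

definition gmul :: "('m::finite \<Rightarrow> real^'n::finite) \<Rightarrow> (real^'n) \<times> (real^'m) \<Rightarrow> (real^'n) \<times> (real^'m) \<Rightarrow> (real^'n) \<times> (real^'m)" where
  "gmul d g h = (fst g + eta d (snd g) *v fst h, snd g + snd h)"

definition int_vec :: "real^'k::finite \<Rightarrow> bool" where
  "int_vec v \<longleftrightarrow> (\<forall>i. v $ i \<in> \<int>)"

definition int_lattice :: "real^'k::finite^'k \<Rightarrow> (real^'k) set" where
  "int_lattice A = {A *v v | v. int_vec v}"

definition SL_int :: "real^'n::finite^'n \<Rightarrow> bool" where
  "SL_int A \<longleftrightarrow> (\<forall>i j. A $ i $ j \<in> \<int>) \<and> det A = 1"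

definition G_compatible :: "('m::finite \<Rightarrow> real^'n::finite) \<Rightarrow> real^'n^'n \<Rightarrow> real^'m^'m \<Rightarrow> bool" where
  "G_compatible d \<sigma> \<rho> \<longleftrightarrow> invertible \<sigma> \<and> invertible \<rho> \<and>
     (\<forall>j. SL_int (\<sigma> ** eta d (column j \<rho>) ** matrix_inv \<sigma>))"

definition lat :: "real^'n::finite^'n \<Rightarrow> real^'m::finite^'m \<Rightarrow> ((real^'n) \<times> (real^'m)) set" where
  "lat \<sigma> \<rho> = {(matrix_inv \<sigma> *v v, \<rho> *v p) | v p. int_vec v \<and> int_vec p}"

definition finite_index :: "('m::finite \<Rightarrow> real^'n::finite) \<Rightarrow> ((real^'n) \<times> (real^'m)) set \<Rightarrow> ((real^'n) \<times> (real^'m)) set \<Rightarrow> bool" where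
  "finite_index d \<Gamma> H \<longleftrightarrow> finite {gmul d g ` H | g. g \<in> \<Gamma>}"

definition commensurable :: "('m::finite \<Rightarrow> real^'n::finite) \<Rightarrow> ((real^'n) \<times> (real^'m)) set \<Rightarrow> ((real^'n) \<times> (real^'m)) set \<Rightarrow> bool" where
  "commensurable d \<Gamma> \<Gamma>' \<longleftrightarrow> finite_index d \<Gamma> (\<Gamma> \<inter> \<Gamma>') \<and> finite_index d \<Gamma>' (\<Gamma> \<inter> \<Gamma>')"

definition Z_independent :: "'a::real_vector set \<Rightarrow> bool" where
  "Z_independent S \<longleftrightarrow> finite S \<and>
     (\<forall>c::'a \<Rightarrow> int. (\<Sum>v\<in>S. of_int (c v) *\<^sub>R v) = 0 \<longrightarrow> (\<forall>v\<in>S. c v = 0))"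

definition Z_rank :: "'a::real_vector set \<Rightarrow> nat" where
  "Z_rank H = (GREATEST k. \<exists>S. S \<subseteq> H \<and> Z_independent S \<and> card S = k)"

end

theory Submission
  imports Defs
begin

text \<open>Write \<open>L = \<sigma>\<^sup>-\<^sup>1\<int>\<^sup>n\<close> and \<open>P = \<rho>\<int>\<^sup>m\<close>, so that the lattice of \<open>(\<sigma>, \<rho>)\<close> is \<open>L \<times> P\<close>.
  Compatibility says that \<open>\<sigma> \<eta>(\<rho> e\<^sub>j) \<sigma>\<^sup>-\<^sup>1 \<in> SL\<^sub>n(\<int>)\<close>, hence \<open>\<eta>(P)\<close> preserves \<open>L\<close>, and the
  intersection of the two lattices is the subgroup \<open>A \<times> B\<close> of \<open>G\<close>, where
  \<open>A = \<sigma>\<^sup>-\<^sup>1\<int>\<^sup>n \<inter> \<nu>\<^sup>-\<^sup>1\<int>\<^sup>n\<close> and \<open>B = \<rho>\<int>\<^sup>m \<inter> \<rr>\<int>\<^sup>m\<close>.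

  \<open>A \<times> B\<close> has finite index in \<open>L \<times> P\<close> iff \<open>N L \<subseteq> A\<close> and \<open>M P \<subseteq> B\<close> for some \<open>N, M > 0\<close>: one
  direction is pigeonhole on the cosets of \<open>(j x, 0)\<close> and \<open>(0, j t)\<close>, \<open>j \<in> \<nat>\<close>; for the other,
  reducing lattice coordinates modulo \<open>N\<close> and \<open>M\<close> leaves finitely many coset representatives.
  Finally, a subgroup \<open>A\<close> of a lattice \<open>T \<int>\<^sup>k\<close> has \<open>\<int>\<close>-rank \<open>k\<close> iff \<open>N T \<int>\<^sup>k \<subseteq> A\<close> for some
  \<open>N > 0\<close>.  The key point is that \<open>\<int>\<close>-independent vectors of \<open>T \<int>\<^sup>k\<close> are \<open>\<real>\<close>-independent,
  so there are at most \<open>k\<close> of them, and any \<open>k\<close> of them generate a subgroup of finite index.\<close>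

section \<open>Additive subgroups and lattices\<close>

definition add_subgroup :: "'a::ab_group_add set \<Rightarrow> bool" where
  "add_subgroup A \<longleftrightarrow> 0 \<in> A \<and> (\<forall>x\<in>A. \<forall>y\<in>A. x + y \<in> A) \<and> (\<forall>x\<in>A. - x \<in> A)"

lemma add_subgroupD:
  assumes "add_subgroup A"
  shows add_subgroup_zero: "0 \<in> A"
    and add_subgroup_add: "x \<in> A \<Longrightarrow> y \<in> A \<Longrightarrow> x + y \<in> A"
    and add_subgroup_uminus: "x \<in> A \<Longrightarrow> - x \<in> A"
  using assms unfolding add_subgroup_def by blast+

lemma add_subgroup_Int: "add_subgroup A \<Longrightarrow> add_subgroup B \<Longrightarrow> add_subgroup (A \<inter> B)"
  by (simp add: add_subgroup_def)

lemma add_subgroup_sum: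
  assumes "add_subgroup A" "\<And>i. i \<in> I \<Longrightarrow> f i \<in> A"
  shows "sum f I \<in> A"
  using assms(2)
  by (induction I rule: infinite_finite_induct)
     (simp_all add: add_subgroup_zero[OF assms(1)] add_subgroup_add[OF assms(1)])

lemma add_subgroup_of_int_scaleR:
  fixes x :: "'a::real_vector"
  assumes A: "add_subgroup A" and x: "x \<in> A"
  shows "of_int k *\<^sub>R x \<in> A"
proof -
  have nat: "of_nat n *\<^sub>R x \<in> A" for n
  proof (induction n)
    case 0
    show ?case using add_subgroup_zero[OF A] by simp
  next
    case (Suc n)
    have "of_nat (Suc n) *\<^sub>R x = x + of_nat n *\<^sub>R x" by (simp add: scaleR_add_left)
    then show ?case using add_subgroup_add[OF A x Suc.IH] by simp
  qed
  show ?thesis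
  proof (cases k rule: int_cases)
    case (nonneg n)
    then show ?thesis using nat by simp
  next
    case (neg n)
    then have "of_int k *\<^sub>R x = - (of_nat (Suc n) *\<^sub>R x)"
      by (simp only: of_int_minus of_int_of_nat_eq scaleR_minus_left)
    also have "\<dots> \<in> A" by (rule add_subgroup_uminus[OF A nat])
    finally show ?thesis .
  qed
qed

lemma add_subgroup_linear_image:
  assumes f: "linear f" and A: "add_subgroup A"
  shows "add_subgroup (f ` A)"
  unfolding add_subgroup_def
proof (intro conjI ballI)
  show "0 \<in> f ` A" using linear_0[OF f] add_subgroup_zero[OF A] by (metis image_eqI)
  fix u v assume "u \<in> f ` A" "v \<in> f ` A"
  then obtain x y where "u = f x" "v = f y" "x \<in> A" "y \<in> A" by blast
  then show "u + v \<in> f ` A" "- u \<in> f ` A"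
    using add_subgroupD[OF A] by (auto simp flip: linear_add[OF f] linear_neg[OF f])
qed

lemma add_subgroup_linear_vimage:
  assumes "linear f" "add_subgroup A"
  shows "add_subgroup (f -` A)"
  using assms unfolding add_subgroup_def by (simp add: linear_0 linear_add linear_neg)

lemma matrix_inv_cancel:
  fixes A :: "'a::comm_ring_1^'k::finite^'k"
  assumes "invertible A"
  shows matrix_mul_matrix_inv: "A ** matrix_inv A = mat 1"
    and matrix_inv_mul: "matrix_inv A ** A = mat 1"
    and matrix_vector_mul_matrix_inv: "A *v (matrix_inv A *v x) = x"
    and matrix_inv_matrix_vector_mul: "matrix_inv A *v (A *v x) = x"
proof -
  have "\<exists>A'. A ** A' = mat 1 \<and> A' ** A = mat 1" using assms unfolding invertible_def by auto
  then have inv: "A ** matrix_inv A = mat 1 \<and> matrix_inv A ** A = mat 1"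
    unfolding matrix_inv_def by (rule someI_ex)
  then show "A ** matrix_inv A = mat 1" "matrix_inv A ** A = mat 1" by auto
  show "A *v (matrix_inv A *v x) = x" "matrix_inv A *v (A *v x) = x"
    using inv by (simp_all add: matrix_vector_mul_assoc)
qed

lemma matrix_vector_mult_sum_scaleR:
  fixes T :: "real^'k::finite^'j::finite"
  shows "T *v (\<Sum>s\<in>S. a s *\<^sub>R x s) = (\<Sum>s\<in>S. a s *\<^sub>R (T *v x s))"
  by (simp add: linear_sum[OF matrix_vector_mul_linear] matrix_vector_mult_scaleR)

lemma invertible_matrix_inv:
  fixes A :: "'a::comm_ring_1^'k::finite^'k"
  shows "invertible A \<Longrightarrow> invertible (matrix_inv A)"
  using matrix_inv_cancel unfolding invertible_def by blast

lemma int_vec_matrix_vector_mult: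
  fixes U :: "real^'k::finite^'j::finite"
  assumes "\<forall>i j. U $ i $ j \<in> \<int>" "int_vec v"
  shows "int_vec (U *v v)"
  using assms unfolding int_vec_def matrix_vector_mult_def
  by (auto intro!: Ints_sum Ints_mult)

lemma of_int_floor_Ints: "x \<in> \<int> \<Longrightarrow> of_int \<lfloor>x\<rfloor> = (x::'a::floor_ceiling)"
  by (metis Ints_cases floor_of_int)

lemma int_vec_iff: "int_vec v \<longleftrightarrow> (\<exists>z. v = (\<chi> i. of_int (z i)))"
proof
  assume "int_vec v"
  then have "v = (\<chi> i. of_int \<lfloor>v $ i\<rfloor>)" unfolding int_vec_def by (simp add: vec_eq_iff)
  then show "\<exists>z. v = (\<chi> i. of_int (z i))" by (rule exI[of _ "\<lambda>i. \<lfloor>v $ i\<rfloor>"])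
qed (auto simp: int_vec_def)

lemma add_subgroup_int_vec: "add_subgroup {v. int_vec v}"
  by (auto simp: add_subgroup_def int_vec_def)

lemma add_subgroup_int_lattice: "add_subgroup (int_lattice T)"
proof -
  have "int_lattice T = (*v) T ` {v. int_vec v}" unfolding int_lattice_def by blast
  then show ?thesis
    using add_subgroup_linear_image[OF matrix_vector_mul_linear add_subgroup_int_vec] by simp
qed

lemma column_in_int_lattice: "column i T \<in> int_lattice T"
proof -
  have "int_vec (axis i 1 :: real^'a)" by (simp add: int_vec_def axis_def)
  then show ?thesis unfolding int_lattice_def matrix_vector_mult_basis[symmetric] by blast
qed

lemma int_lattice_subset:
  fixes T :: "real^'k::finite^'k"
  assumes A: "add_subgroup A" and cols: "\<And>i. column i T \<in> A"
  shows "int_lattice T \<subseteq> A"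
proof
  fix x assume "x \<in> int_lattice T"
  then obtain v where x: "x = T *v v" and "int_vec v" unfolding int_lattice_def by blast
  then obtain z where "v = (\<chi> i. of_int (z i))" unfolding int_vec_iff by blast
  then have "x = (\<Sum>i\<in>UNIV. of_int (z i) *\<^sub>R column i T)"
    unfolding x matrix_mult_sum scalar_mult_eq_scaleR by simp
  also have "\<dots> \<in> A"
    by (intro add_subgroup_sum[OF A] add_subgroup_of_int_scaleR[OF A cols])
  finally show "x \<in> A" .
qed

definition finite_exponent :: "'a::real_vector set \<Rightarrow> 'a set \<Rightarrow> bool" where
  "finite_exponent L A \<longleftrightarrow> (\<exists>N::int. N > 0 \<and> (\<forall>x\<in>L. of_int N *\<^sub>R x \<in> A))"

lemma finite_exponent_int_lattice:
  fixes T :: "real^'k::finite^'k"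
  assumes A: "add_subgroup A" and cols: "\<And>i. \<exists>N::int. N > 0 \<and> of_int N *\<^sub>R column i T \<in> A"
  shows "finite_exponent (int_lattice T) A"
proof -
  obtain N where N: "\<And>i. N i > 0 \<and> of_int (N i) *\<^sub>R column i T \<in> A"
    using cols by metis
  define M where "M = (\<Prod>i\<in>UNIV. N i)"
  have "M > 0" unfolding M_def using N by (simp add: prod_pos)
  have M_cols: "of_int M *\<^sub>R column i T \<in> A" for i
  proof -
    have "M = (\<Prod>j\<in>UNIV - {i}. N j) * N i"
      unfolding M_def by (subst mult.commute) (rule prod.remove; simp)
    then have "of_int M *\<^sub>R column i T = of_int (\<Prod>j\<in>UNIV - {i}. N j) *\<^sub>R (of_int (N i) *\<^sub>R column i T)"
      by simp
    also have "\<dots> \<in> A" by (rule add_subgroup_of_int_scaleR[OF A conjunct2[OF N]])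
    finally show ?thesis .
  qed
  have "int_lattice T \<subseteq> (*\<^sub>R) (of_int M) -` A"
    by (rule int_lattice_subset[OF add_subgroup_linear_vimage[OF linear_scale_self A]])
       (simp add: M_cols)
  then show ?thesis using \<open>M > 0\<close> unfolding finite_exponent_def by blast
qed

section \<open>The \<open>\<int>\<close>-rank of a sublattice\<close>

lemma exists_rat_linear_functional:
  fixes x :: real
  assumes "x \<noteq> 0"
  shows "\<exists>f :: real \<Rightarrow> rat. Modules.additive f \<and> (\<forall>q a. f (of_rat q * a) = q * f a) \<and> f x = 1"
proof -
  interpret vector_space_pair "\<lambda>q (a::real). of_rat q * a" "\<lambda>q (r::rat). q * r"
    by unfold_locales (simp_all add: algebra_simps of_rat_add of_rat_mult)
  have ind: "vs1.independent {x}" using assms by simp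
  define f where "f = construct {x} (\<lambda>_. 1)"
  interpret lin: Vector_Spaces.linear "\<lambda>q (a::real). of_rat q * a" "\<lambda>q (r::rat). q * r" f
    unfolding f_def by (rule linear_construct[OF ind])
  have "Modules.additive f" by (rule additive.intro) (rule lin.add)
  moreover have "f x = 1" unfolding f_def by (rule construct_basis[OF ind]) simp
  ultimately show ?thesis using lin.scale by blast
qed

lemma rat_common_denominator:
  fixes r :: "'a \<Rightarrow> rat"
  assumes "finite S"
  shows "\<exists>D::int. D > 0 \<and> (\<forall>s\<in>S. of_int D * r s \<in> \<int>)"
  using assms
proof (induction S rule: finite_induct)
  case empty
  show ?case by (intro exI[of _ 1]) simp
next
  case (insert a S)
  then obtain D where D: "D > 0" "\<forall>s\<in>S. of_int D * r s \<in> \<int>" by blast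
  obtain p q where pq: "quotient_of (r a) = (p, q)" by (cases "quotient_of (r a)")
  have q: "q > 0" using quotient_of_denom_pos[OF pq] .
  have "of_int (D * q) * r a = of_int (D * p)"
    using q by (simp add: quotient_of_div[OF pq])
  then have "of_int (D * q) * r a \<in> \<int>" by (metis Ints_of_int)
  moreover have "of_int (D * q) * r s \<in> \<int>" if "s \<in> S" for s
  proof -
    have "of_int (D * q) * r s = of_int q * (of_int D * r s)" by simp
    then show ?thesis using D(2) that by (metis Ints_mult Ints_of_int)
  qed
  ultimately show ?case using D(1) q by (intro exI[of _ "D * q"]) auto
qed

text \<open>A \<open>\<rat>\<close>-linear functional \<open>f : \<real> \<rightarrow> \<rat>\<close> with \<open>f (c s\<^sub>0) = 1\<close> turns the real relation
  into a rational one with a nonzero coefficient; clearing denominators makes it integral.\<close>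

lemma int_vec_dependent_imp_int_relation:
  fixes w :: "'a \<Rightarrow> real^'k::finite"
  assumes S: "finite S" and w: "\<And>s. s \<in> S \<Longrightarrow> int_vec (w s)"
    and rel: "(\<Sum>s\<in>S. c s *\<^sub>R w s) = 0" and s0: "s0 \<in> S" "c s0 \<noteq> 0"
  shows "\<exists>e::'a \<Rightarrow> int. (\<Sum>s\<in>S. of_int (e s) *\<^sub>R w s) = 0 \<and> e s0 \<noteq> 0"
proof -
  obtain f :: "real \<Rightarrow> rat" where f: "Modules.additive f" and hom: "\<And>q a. f (of_rat q * a) = q * f a"
    and f1: "f (c s0) = 1"
    using exists_rat_linear_functional[OF s0(2)] by blast
  define q where "q s = f (c s)" for s
  have rat_rel: "(\<Sum>s\<in>S. of_rat (q s) *\<^sub>R w s) = 0"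
  proof (rule vec_eq_iff[THEN iffD2], intro allI)
    fix i
    define z where "z s = \<lfloor>w s $ i\<rfloor>" for s
    have z: "w s $ i = of_int (z s)" if "s \<in> S" for s
      using w[OF that] unfolding int_vec_def z_def by (simp add: of_int_floor_Ints)
    have hom_int: "f (a * of_int k) = of_int k * f a" for a k
      using hom[of "of_int k" a] by (simp add: mult.commute)
    have "(\<Sum>s\<in>S. q s * of_int (z s)) = (\<Sum>s\<in>S. f (c s * w s $ i))"
      using z by (simp add: q_def hom_int mult.commute)
    also have "\<dots> = f (\<Sum>s\<in>S. c s * w s $ i)"
      by (rule additive.sum[OF f, symmetric])
    also have "\<dots> = 0"
      using rel additive.zero[OF f] by (simp add: vec_eq_iff sum_component)
    finally have "(\<Sum>s\<in>S. q s * of_int (z s)) = 0" .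
    moreover have "(\<Sum>s\<in>S. of_rat (q s) * w s $ i) = of_rat (\<Sum>s\<in>S. q s * of_int (z s))"
      using z by (simp add: of_rat_sum of_rat_mult)
    ultimately show "(\<Sum>s\<in>S. of_rat (q s) *\<^sub>R w s) $ i = 0 $ i"
      by (simp add: sum_component)
  qed
  obtain D :: int where D: "D > 0" "\<forall>s\<in>S. of_int D * q s \<in> \<int>"
    using rat_common_denominator[OF S] by blast
  define e where "e s = \<lfloor>of_int D * q s\<rfloor>" for s
  have e: "of_int (e s) = of_int D * q s" if "s \<in> S" for s
    using D(2) that unfolding e_def by (simp add: of_int_floor_Ints)
  have e_real: "real_of_int (e s) = of_int D * of_rat (q s)" if "s \<in> S" for s
    using arg_cong[OF e[OF that], of of_rat] by (simp add: of_rat_mult)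
  have "(\<Sum>s\<in>S. of_int (e s) *\<^sub>R w s) = of_int D *\<^sub>R (\<Sum>s\<in>S. of_rat (q s) *\<^sub>R w s)"
    by (simp add: scaleR_sum_right e_real)
  moreover have "e s0 \<noteq> 0" using e[OF s0(1)] D(1) by (simp add: q_def f1)
  ultimately show ?thesis using rat_rel by auto
qed

lemma Z_independent_imp_independent:
  fixes T :: "real^'k::finite^'k"
  assumes T: "invertible T" and S: "S \<subseteq> int_lattice T" and ind: "Z_independent S"
  shows "independent S"
proof (rule ccontr)
  assume "\<not> independent S"
  moreover have fin: "finite S" using ind unfolding Z_independent_def by blast
  ultimately obtain c s0 where rel: "(\<Sum>s\<in>S. c s *\<^sub>R s) = 0" and s0: "s0 \<in> S" "c s0 \<noteq> 0"
    unfolding independent_explicit by blast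
  define w where "w s = matrix_inv T *v s" for s
  have w_int: "int_vec (w s)" if "s \<in> S" for s
    using S that matrix_inv_matrix_vector_mul[OF T] unfolding int_lattice_def w_def by auto
  have "(\<Sum>s\<in>S. c s *\<^sub>R w s) = matrix_inv T *v (\<Sum>s\<in>S. c s *\<^sub>R s)"
    unfolding w_def matrix_vector_mult_sum_scaleR ..
  then have w_rel: "(\<Sum>s\<in>S. c s *\<^sub>R w s) = 0" using rel by simp
  obtain e :: "real^'k \<Rightarrow> int" where e: "(\<Sum>s\<in>S. of_int (e s) *\<^sub>R w s) = 0" "e s0 \<noteq> 0"
    using int_vec_dependent_imp_int_relation[OF fin w_int w_rel s0] by blast
  have "(\<Sum>s\<in>S. of_int (e s) *\<^sub>R s) = T *v (\<Sum>s\<in>S. of_int (e s) *\<^sub>R w s)"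
    unfolding matrix_vector_mult_sum_scaleR w_def matrix_vector_mul_matrix_inv[OF T] ..
  then have "(\<Sum>s\<in>S. of_int (e s) *\<^sub>R s) = 0" using e(1) by simp
  then show False using ind e(2) s0(1) unfolding Z_independent_def by blast
qed

lemma card_Z_independent_le:
  fixes T :: "real^'k::finite^'k"
  assumes "invertible T" "S \<subseteq> int_lattice T" "Z_independent S"
  shows "card S \<le> CARD('k)"
  using independent_bound[OF Z_independent_imp_independent[OF assms]] by simp

lemma independent_imp_Z_independent:
  fixes S :: "'a::euclidean_space set"
  assumes "independent S"
  shows "Z_independent S"
proof -
  have ind: "finite S \<and> (\<forall>c. (\<Sum>v\<in>S. c v *\<^sub>R v) = 0 \<longrightarrow> (\<forall>v\<in>S. c v = 0))"
    using assms unfolding independent_explicit .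
  show ?thesis
    unfolding Z_independent_def
  proof (intro conjI allI impI ballI)
    show "finite S" using ind by blast
    fix c :: "'a \<Rightarrow> int" and v
    assume "(\<Sum>v\<in>S. of_int (c v) *\<^sub>R v) = 0" "v \<in> S"
    with ind[THEN conjunct2, rule_format, of "\<lambda>v. of_int (c v)"] show "c v = 0" by simp
  qed
qed

lemma
  fixes T :: "real^'k::finite^'k"
  assumes T: "invertible T"
  shows inj_column: "inj (\<lambda>i. column i T)"
    and independent_range_column: "independent (range (\<lambda>i. column i T))"
proof -
  show inj: "inj (\<lambda>i. column i T)"
  proof (rule injI)
    fix i j assume "column i T = column j T"
    then have "T *v axis i 1 = T *v axis j (1::real)" by (simp add: matrix_vector_mult_basis)
    then show "i = j" using inj_matrix_vector_mult[OF T] by (simp add: inj_eq axis_eq_axis)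
  qed
  have left_inv: "\<exists>B. B ** T = mat 1" using T unfolding invertible_def by blast
  show "independent (range (\<lambda>i. column i T))"
    unfolding independent_explicit
  proof (intro conjI allI impI ballI)
    fix c v
    assume "(\<Sum>v\<in>range (\<lambda>i. column i T). c v *\<^sub>R v) = 0" and v: "v \<in> range (\<lambda>i. column i T)"
    then have "(\<Sum>i\<in>UNIV. c (column i T) *s column i T) = 0"
      by (simp add: sum.reindex[OF inj] scalar_mult_eq_scaleR)
    then show "c v = 0"
      using left_inv v unfolding matrix_left_invertible_independent_columns by auto
  qed simp
qed

lemma Z_rank_eq_CARD_iff:
  fixes T :: "real^'k::finite^'k"
  assumes T: "invertible T" and sub: "A \<subseteq> int_lattice T"
  shows "Z_rank A = CARD('k) \<longleftrightarrow> (\<exists>S\<subseteq>A. Z_independent S \<and> card S = CARD('k))"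
proof -
  define P where "P n \<longleftrightarrow> (\<exists>S\<subseteq>A. Z_independent S \<and> card S = n)" for n
  have bound: "n \<le> CARD('k)" if "P n" for n
  proof -
    from that obtain S where S: "S \<subseteq> A" "Z_independent S" "card S = n" unfolding P_def by blast
    have "S \<subseteq> int_lattice T" using S(1) sub by (rule order_trans)
    from card_Z_independent_le[OF T this S(2)] S(3) show ?thesis by simp
  qed
  have "P 0" unfolding P_def by (intro exI[of _ "{}"]) (simp add: Z_independent_def)
  then have rank: "P (Z_rank A)"
    unfolding Z_rank_def P_def[symmetric] by (rule GreatestI_nat[where b = "CARD('k)"]) (rule bound)
  show ?thesis
    unfolding P_def[symmetric]
  proof
    assume "Z_rank A = CARD('k)"
    then show "P CARD('k)" using rank by simp
  next
    assume "P CARD('k)"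
    then show "Z_rank A = CARD('k)"
      unfolding Z_rank_def P_def[symmetric] by (rule Greatest_equality) (rule bound)
  qed
qed

lemma exists_int_multiple_in_full_rank:
  fixes T :: "real^'k::finite^'k"
  assumes T: "invertible T" and A: "add_subgroup A" and sub: "A \<subseteq> int_lattice T"
    and S: "S \<subseteq> A" "Z_independent S" "card S = CARD('k)" and x: "x \<in> int_lattice T"
  shows "\<exists>N::int. N > 0 \<and> of_int N *\<^sub>R x \<in> A"
proof (cases "x \<in> S")
  case True
  then show ?thesis using S(1) by (intro exI[of _ 1]) auto
next
  case False
  have fin: "finite S" using S(2) unfolding Z_independent_def by blast
  have "\<not> Z_independent (insert x S)"
  proof
    assume ind: "Z_independent (insert x S)"
    have "insert x S \<subseteq> int_lattice T" using x order_trans[OF S(1) sub] by simp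
    from card_Z_independent_le[OF T this ind] show False using False fin S(3) by simp
  qed
  then obtain c :: "real^'k \<Rightarrow> int" where c: "(\<Sum>v\<in>insert x S. of_int (c v) *\<^sub>R v) = 0"
    and nz: "\<exists>v\<in>insert x S. c v \<noteq> 0"
    using fin unfolding Z_independent_def by blast
  then have rel: "of_int (c x) *\<^sub>R x = - (\<Sum>v\<in>S. of_int (c v) *\<^sub>R v)"
    using False fin by (simp add: eq_neg_iff_add_eq_0)
  have "c x \<noteq> 0"
  proof
    assume "c x = 0"
    then have "(\<Sum>v\<in>S. of_int (c v) *\<^sub>R v) = 0" using rel by simp
    then have "\<forall>v\<in>S. c v = 0" using S(2) unfolding Z_independent_def by blast
    then show False using nz \<open>c x = 0\<close> by auto
  qed
  have "of_int (c x) *\<^sub>R x \<in> A"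
    unfolding rel using S(1)
    by (intro add_subgroup_uminus[OF A] add_subgroup_sum[OF A] add_subgroup_of_int_scaleR[OF A]) auto
  then have "of_int (sgn (c x)) *\<^sub>R (of_int (c x) *\<^sub>R x) \<in> A"
    by (rule add_subgroup_of_int_scaleR[OF A])
  then have "of_int \<bar>c x\<bar> *\<^sub>R x \<in> A"
    by (simp add: abs_sgn mult.commute)
  then show ?thesis using \<open>c x \<noteq> 0\<close> by (intro exI[of _ "\<bar>c x\<bar>"]) simp
qed

lemma Z_rank_eq_CARD_iff_finite_exponent:
  fixes T :: "real^'k::finite^'k"
  assumes T: "invertible T" and A: "add_subgroup A" and sub: "A \<subseteq> int_lattice T"
  shows "Z_rank A = CARD('k) \<longleftrightarrow> finite_exponent (int_lattice T) A"
proof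
  assume "Z_rank A = CARD('k)"
  then obtain S where S: "S \<subseteq> A" "Z_independent S" "card S = CARD('k)"
    using Z_rank_eq_CARD_iff[OF T sub] by blast
  show "finite_exponent (int_lattice T) A"
    by (rule finite_exponent_int_lattice[OF A])
       (rule exists_int_multiple_in_full_rank[OF T A sub S column_in_int_lattice])
next
  assume "finite_exponent (int_lattice T) A"
  then obtain N :: int where N: "N > 0" "\<forall>x\<in>int_lattice T. of_int N *\<^sub>R x \<in> A"
    unfolding finite_exponent_def by blast
  let ?T = "of_int N *\<^sub>R T"
  have T': "invertible ?T" using N(1) by (simp add: scalar_invertible T)
  have col: "column i ?T = of_int N *\<^sub>R column i T" for i
    by (simp add: column_def vec_eq_iff)
  have "range (\<lambda>i. column i ?T) \<subseteq> A"
    using N(2) column_in_int_lattice by (auto simp: col)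
  moreover have "Z_independent (range (\<lambda>i. column i ?T))"
    by (rule independent_imp_Z_independent[OF independent_range_column[OF T']])
  moreover have "card (range (\<lambda>i. column i ?T)) = CARD('k)"
    using inj_column[OF T'] by (simp add: card_image)
  ultimately show "Z_rank A = CARD('k)" using Z_rank_eq_CARD_iff[OF T sub] by blast
qed

section \<open>The group \<open>G\<close>\<close>

lemma eta_mult_vec: "eta d t *v x = (\<chi> k. exp (\<Sum>i\<in>UNIV. t $ i * d i $ k) * x $ k)"
proof -
  have "(if P then a else 0) * b = (if P then a * b else 0)" for P and a b :: real by simp
  then show ?thesis
    by (simp add: eta_def matrix_vector_mult_def vec_eq_iff sum.delta cong: if_cong)
qed

lemma eta_add: "eta d (s + t) *v x = eta d s *v (eta d t *v x)"
  by (simp add: eta_mult_vec vec_eq_iff algebra_simps sum.distrib exp_add)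

lemma eta_zero: "eta d 0 *v x = x"
  by (simp add: eta_mult_vec vec_eq_iff)

lemma eta_uminus_cancel:
  shows "eta d (- t) *v (eta d t *v x) = x" and "eta d t *v (eta d (- t) *v x) = x"
  by (simp_all flip: eta_add add: eta_zero)

definition ginv :: "('m::finite \<Rightarrow> real^'n::finite) \<Rightarrow> (real^'n) \<times> (real^'m) \<Rightarrow> (real^'n) \<times> (real^'m)" where
  "ginv d g = (- (eta d (- snd g) *v fst g), - snd g)"

lemma gmul_assoc: "gmul d (gmul d g h) k = gmul d g (gmul d h k)"
  by (simp add: gmul_def eta_add matrix_vector_right_distrib algebra_simps)

lemma gmul_zero_left: "gmul d (0, 0) h = h"
  by (simp add: gmul_def eta_zero)

lemma gmul_ginv: "gmul d g (ginv d g) = (0, 0)"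
  by (simp add: gmul_def ginv_def linear_neg[OF matrix_vector_mul_linear] eta_uminus_cancel)

definition G_subgroup :: "('m::finite \<Rightarrow> real^'n::finite) \<Rightarrow> ((real^'n) \<times> (real^'m)) set \<Rightarrow> bool" where
  "G_subgroup d H \<longleftrightarrow> (\<forall>g\<in>H. \<forall>h\<in>H. gmul d g h \<in> H) \<and> (\<forall>g\<in>H. ginv d g \<in> H)"

lemma G_subgroup_coset_self:
  assumes H: "G_subgroup d H" and h: "h \<in> H"
  shows "gmul d h ` H = H"
proof
  show "gmul d h ` H \<subseteq> H" using H h unfolding G_subgroup_def by blast
  show "H \<subseteq> gmul d h ` H"
  proof
    fix k assume k: "k \<in> H"
    have "k = gmul d h (gmul d (ginv d h) k)"
      by (simp flip: gmul_assoc add: gmul_ginv gmul_zero_left)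
    moreover have "gmul d (ginv d h) k \<in> H" using H h k unfolding G_subgroup_def by blast
    ultimately show "k \<in> gmul d h ` H" by (rule image_eqI)
  qed
qed

lemma gmul_coset_absorb:
  assumes "G_subgroup d H" "h \<in> H"
  shows "gmul d (gmul d g h) ` H = gmul d g ` H"
proof -
  have "gmul d (gmul d g h) ` H = gmul d g ` gmul d h ` H"
    by (simp add: gmul_assoc image_image)
  then show ?thesis using G_subgroup_coset_self[OF assms] by simp
qed

lemma G_subgroup_Times:
  assumes A: "add_subgroup A" and B: "add_subgroup B"
    and pres: "\<And>t x. t \<in> B \<Longrightarrow> x \<in> A \<Longrightarrow> eta d t *v x \<in> A"
  shows "G_subgroup d (A \<times> B)"
  unfolding G_subgroup_def gmul_def ginv_def
  using add_subgroupD[OF A] add_subgroupD[OF B] pres by auto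

lemma det_Ints:
  fixes M :: "real^'k::finite^'k"
  assumes "\<And>i j. M $ i $ j \<in> \<int>"
  shows "det M \<in> \<int>"
  unfolding det_def using assms by (intro Ints_sum Ints_mult Ints_prod) auto

lemma SL_int_surj_int_vec:
  assumes U: "SL_int U" and v: "int_vec v"
  shows "\<exists>y. int_vec y \<and> U *v y = v"
proof -
  define y where "y = (\<chi> k. det (\<chi> i j. if j = k then v $ i else U $ i $ j))"
  have "U *v y = v" using cramer[of U] U unfolding SL_int_def y_def by simp
  moreover have "int_vec y"
    using U v unfolding y_def int_vec_def SL_int_def by (auto intro!: det_Ints)
  ultimately show ?thesis by blast
qed

lemma SL_int_conj_preserves_int_lattice:
  assumes \<sigma>: "invertible \<sigma>" and U: "SL_int (\<sigma> ** E ** matrix_inv \<sigma>)"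
    and x: "x \<in> int_lattice (matrix_inv \<sigma>)"
  shows "E *v x \<in> int_lattice (matrix_inv \<sigma>)"
    and "\<exists>y\<in>int_lattice (matrix_inv \<sigma>). E *v y = x"
proof -
  let ?U = "\<sigma> ** E ** matrix_inv \<sigma>"
  have U_vec: "?U *v u = \<sigma> *v (E *v (matrix_inv \<sigma> *v u))" for u
    by (simp add: matrix_vector_mul_assoc matrix_mul_assoc)
  have E_vec: "E *v (matrix_inv \<sigma> *v u) = matrix_inv \<sigma> *v (?U *v u)" for u
    unfolding U_vec matrix_inv_matrix_vector_mul[OF \<sigma>] ..
  obtain v where v: "x = matrix_inv \<sigma> *v v" "int_vec v"
    using x unfolding int_lattice_def by blast
  have "int_vec (?U *v v)"
    using U v(2) unfolding SL_int_def by (intro int_vec_matrix_vector_mult) auto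
  then show "E *v x \<in> int_lattice (matrix_inv \<sigma>)"
    unfolding v(1) E_vec int_lattice_def by blast
  obtain u where u: "int_vec u" "?U *v u = v" using SL_int_surj_int_vec[OF U v(2)] by blast
  have "E *v (matrix_inv \<sigma> *v u) = x" unfolding E_vec u(2) v(1) ..
  moreover have "matrix_inv \<sigma> *v u \<in> int_lattice (matrix_inv \<sigma>)"
    using u(1) unfolding int_lattice_def by blast
  ultimately show "\<exists>y\<in>int_lattice (matrix_inv \<sigma>). E *v y = x" by blast
qed

lemma eta_preserves_int_lattice:
  assumes comp: "G_compatible d \<sigma> \<rho>" and t: "t \<in> int_lattice \<rho>"
    and x: "x \<in> int_lattice (matrix_inv \<sigma>)"
  shows "eta d t *v x \<in> int_lattice (matrix_inv \<sigma>)"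
proof -
  let ?L = "int_lattice (matrix_inv \<sigma>)"
  have \<sigma>: "invertible \<sigma>" and U: "\<And>j. SL_int (\<sigma> ** eta d (column j \<rho>) ** matrix_inv \<sigma>)"
    using comp unfolding G_compatible_def by blast+
  define Good where "Good = {t. \<forall>x\<in>?L. eta d t *v x \<in> ?L \<and> eta d (- t) *v x \<in> ?L}"
  have "add_subgroup Good"
    unfolding add_subgroup_def Good_def
    by (auto simp: eta_zero eta_add eta_add[of _ "- _" "- _", simplified])
  moreover have "column j \<rho> \<in> Good" for j
  proof -
    have "eta d (- column j \<rho>) *v y \<in> ?L" if y: "y \<in> ?L" for y
    proof -
      obtain z where "z \<in> ?L" "eta d (column j \<rho>) *v z = y"
        using SL_int_conj_preserves_int_lattice(2)[OF \<sigma> U y] by blast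
      then show ?thesis by (metis eta_uminus_cancel(1))
    qed
    then show ?thesis
      unfolding Good_def using SL_int_conj_preserves_int_lattice(1)[OF \<sigma> U] by blast
  qed
  ultimately have "int_lattice \<rho> \<subseteq> Good" by (rule int_lattice_subset)
  then show ?thesis using t x unfolding Good_def by blast
qed

section \<open>Subgroups of finite index\<close>

lemma finite_index_coset_collision:
  fixes f :: "nat \<Rightarrow> (real^'n::finite) \<times> (real^'m::finite)"
  assumes fi: "finite_index d \<Gamma> H" and f: "\<And>j. f j \<in> \<Gamma>"
  shows "\<exists>i j. i < j \<and> gmul d (f j) ` H = gmul d (f i) ` H"
proof -
  let ?C = "\<lambda>j. gmul d (f j) ` H"
  have "range ?C \<subseteq> {gmul d g ` H | g. g \<in> \<Gamma>}" using f by blast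
  then have "finite (range ?C)"
    using fi unfolding finite_index_def by (rule finite_subset)
  then have "\<not> inj ?C" using range_inj_infinite[of ?C] by blast
  then obtain i j where ij: "i \<noteq> j" "?C i = ?C j" unfolding inj_def by blast
  consider "i < j" | "j < i" using ij(1) by linarith
  then show ?thesis
  proof cases
    case 1
    then show ?thesis using ij(2) by (intro exI[of _ i] exI[of _ j]) simp
  next
    case 2
    then show ?thesis using ij(2) by (intro exI[of _ j] exI[of _ i]) simp
  qed
qed

lemma finite_index_imp_multiples:
  assumes fi: "finite_index d (L \<times> P) (A \<times> B)" and L: "add_subgroup L" and P: "add_subgroup P"
    and A0: "0 \<in> A" and B0: "0 \<in> B"
  shows "x \<in> L \<Longrightarrow> \<exists>N::int. N > 0 \<and> of_int N *\<^sub>R x \<in> A"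
    and "t \<in> P \<Longrightarrow> \<exists>N::int. N > 0 \<and> of_int N *\<^sub>R t \<in> B"
proof -
  have member: "\<exists>a\<in>A. \<exists>b\<in>B. g' = gmul d g (a, b)"
    if "gmul d g' ` (A \<times> B) = gmul d g ` (A \<times> B)" for g g'
  proof -
    have "g' = gmul d g' (0, 0)" by (simp add: gmul_def)
    then have "g' \<in> gmul d g' ` (A \<times> B)" using A0 B0 by (simp add: rev_image_eqI)
    then have "g' \<in> gmul d g ` (A \<times> B)" unfolding that .
    then show ?thesis by auto
  qed
  have multiple: "of_nat j *\<^sub>R y \<in> S" if "add_subgroup S" "y \<in> S" for S and j :: nat and y :: "'c::real_vector"
    using add_subgroup_of_int_scaleR[OF that, of "int j"] by simp
  show "\<exists>N::int. N > 0 \<and> of_int N *\<^sub>R x \<in> A" if x: "x \<in> L"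
  proof -
    have "(of_nat j *\<^sub>R x, 0) \<in> L \<times> P" for j
      using multiple[OF L x] add_subgroup_zero[OF P] by simp
    from finite_index_coset_collision[OF fi this] obtain i j :: nat where ij: "i < j"
      and coset: "gmul d (of_nat j *\<^sub>R x, 0) ` (A \<times> B) = gmul d (of_nat i *\<^sub>R x, 0) ` (A \<times> B)"
      by blast
    from member[OF coset] obtain a b where a: "a \<in> A"
      and "(of_nat j *\<^sub>R x, 0) = gmul d (of_nat i *\<^sub>R x, 0) (a, b)"
      by blast
    then have "a = of_int (int j - int i) *\<^sub>R x" by (simp add: gmul_def eta_zero algebra_simps)
    then show ?thesis using a ij by (intro exI[of _ "int j - int i"]) simp
  qed
  show "\<exists>N::int. N > 0 \<and> of_int N *\<^sub>R t \<in> B" if t: "t \<in> P"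
  proof -
    have "(0, of_nat j *\<^sub>R t) \<in> L \<times> P" for j
      using multiple[OF P t] add_subgroup_zero[OF L] by simp
    from finite_index_coset_collision[OF fi this] obtain i j :: nat where ij: "i < j"
      and coset: "gmul d (0, of_nat j *\<^sub>R t) ` (A \<times> B) = gmul d (0, of_nat i *\<^sub>R t) ` (A \<times> B)"
      by blast
    from member[OF coset] obtain a b where b: "b \<in> B"
      and "(0, of_nat j *\<^sub>R t) = gmul d (0, of_nat i *\<^sub>R t) (a, b)"
      by blast
    then have "b = of_int (int j - int i) *\<^sub>R t" by (simp add: gmul_def algebra_simps)
    then show ?thesis using b ij by (intro exI[of _ "int j - int i"]) simp
  qed
qed

lemma finite_vec_components_in:
  assumes "finite S"
  shows "finite {v::'a^'k::finite. \<forall>i. v $ i \<in> S}"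
proof -
  have "{v::'a^'k. \<forall>i. v $ i \<in> S} \<subseteq> vec_lambda ` PiE UNIV (\<lambda>_. S)"
  proof
    fix v :: "'a^'k" assume "v \<in> {v. \<forall>i. v $ i \<in> S}"
    then have "(\<lambda>i. v $ i) \<in> PiE UNIV (\<lambda>_. S)" by auto
    then show "v \<in> vec_lambda ` PiE UNIV (\<lambda>_. S)" by (rule rev_image_eqI) simp
  qed
  moreover have "finite (vec_lambda ` PiE (UNIV :: 'k set) (\<lambda>_. S))"
    using assms by (simp add: finite_PiE)
  ultimately show ?thesis by (rule finite_subset)
qed

definition residue_box :: "int \<Rightarrow> (real^'k::finite) set" where
  "residue_box N = {u. \<forall>i. u $ i \<in> of_int ` {0..<N}}"

lemma finite_residue_box: "finite (residue_box N)"
  unfolding residue_box_def by (rule finite_vec_components_in) simp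

lemma int_vec_mod_decomp:
  fixes v :: "real^'k::finite" and N :: int
  assumes v: "int_vec v" and N: "N > 0"
  obtains r w where "v = r + of_int N *\<^sub>R w" "int_vec r" "int_vec w" "r \<in> residue_box N"
proof -
  obtain z where z: "v = (\<chi> i. of_int (z i))" using v unfolding int_vec_iff by blast
  define r :: "real^'k" where "r = (\<chi> i. of_int (z i mod N))"
  define w :: "real^'k" where "w = (\<chi> i. of_int (z i div N))"
  have "of_int (z i) = (of_int (z i mod N) + of_int N * of_int (z i div N) :: real)" for i
    by (metis mod_mult_div_eq of_int_add of_int_mult)
  then have "v = r + of_int N *\<^sub>R w"
    unfolding z r_def w_def by (simp add: vec_eq_iff)
  moreover have "int_vec r" "int_vec w" by (simp_all add: int_vec_def r_def w_def)
  moreover have "r \<in> residue_box N"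
    unfolding r_def residue_box_def using N by auto
  ultimately show ?thesis by (rule that)
qed

lemma coset_representative_in_residue_box:
  fixes T :: "real^'n::finite^'n" and R :: "real^'m::finite^'m"
  assumes H: "G_subgroup d (A \<times> B)"
    and pres: "\<And>t x. t \<in> int_lattice R \<Longrightarrow> x \<in> int_lattice T \<Longrightarrow> eta d t *v x \<in> int_lattice T"
    and N: "N > 0" "\<And>x. x \<in> int_lattice T \<Longrightarrow> of_int N *\<^sub>R x \<in> A"
    and M: "M > 0" "\<And>t. t \<in> int_lattice R \<Longrightarrow> of_int M *\<^sub>R t \<in> B"
    and "int_vec v" "int_vec p"
  shows "\<exists>v'\<in>residue_box N. \<exists>p'\<in>residue_box M.
    gmul d (T *v v, R *v p) ` (A \<times> B) = gmul d (T *v v', R *v p') ` (A \<times> B)"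
proof -
  have A0: "0 \<in> A" using N(2)[OF add_subgroup_zero[OF add_subgroup_int_lattice]] by simp
  have B0: "0 \<in> B" using M(2)[OF add_subgroup_zero[OF add_subgroup_int_lattice]] by simp
  obtain v' w where v: "v = v' + of_int N *\<^sub>R w" "int_vec w" and v': "v' \<in> residue_box N"
    using int_vec_mod_decomp[OF \<open>int_vec v\<close> N(1)] by blast
  obtain p' q where p: "p = p' + of_int M *\<^sub>R q" "int_vec p'" "int_vec q" and p': "p' \<in> residue_box M"
    using int_vec_mod_decomp[OF \<open>int_vec p\<close> M(1)] by blast
  let ?t = "R *v p'"
  have "- ?t \<in> int_lattice R"
    using p(2) add_subgroup_uminus[OF add_subgroup_int_lattice] unfolding int_lattice_def by blast
  then have y: "eta d (- ?t) *v (T *v w) \<in> int_lattice T"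
    using pres v(2) unfolding int_lattice_def by blast
  have "(T *v v, R *v p) = gmul d (T *v v, ?t) (0, of_int M *\<^sub>R (R *v q))"
    unfolding gmul_def p(1) by (simp add: matrix_vector_right_distrib matrix_vector_mult_scaleR)
  moreover have "(T *v v, ?t) = gmul d (T *v v', ?t) (of_int N *\<^sub>R (eta d (- ?t) *v (T *v w)), 0)"
    unfolding gmul_def v(1)
    by (simp add: matrix_vector_right_distrib matrix_vector_mult_scaleR eta_uminus_cancel)
  moreover have "of_int M *\<^sub>R (R *v q) \<in> B" using M(2) p(3) unfolding int_lattice_def by blast
  moreover have "of_int N *\<^sub>R (eta d (- ?t) *v (T *v w)) \<in> A" using N(2)[OF y] .
  ultimately have "gmul d (T *v v, R *v p) ` (A \<times> B) = gmul d (T *v v', R *v p') ` (A \<times> B)"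
    using gmul_coset_absorb[OF H] A0 B0 by simp
  then show ?thesis using v' p' by blast
qed

lemma finite_exponents_imp_finite_index:
  fixes T :: "real^'n::finite^'n" and R :: "real^'m::finite^'m"
  assumes H: "G_subgroup d (A \<times> B)"
    and pres: "\<And>t x. t \<in> int_lattice R \<Longrightarrow> x \<in> int_lattice T \<Longrightarrow> eta d t *v x \<in> int_lattice T"
    and A: "finite_exponent (int_lattice T) A" and B: "finite_exponent (int_lattice R) B"
  shows "finite_index d (int_lattice T \<times> int_lattice R) (A \<times> B)"
proof -
  obtain N :: int where N: "N > 0" "\<And>x. x \<in> int_lattice T \<Longrightarrow> of_int N *\<^sub>R x \<in> A"
    using A unfolding finite_exponent_def by blast
  obtain M :: int where M: "M > 0" "\<And>t. t \<in> int_lattice R \<Longrightarrow> of_int M *\<^sub>R t \<in> B"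
    using B unfolding finite_exponent_def by blast
  let ?coset = "\<lambda>(v, p). gmul d (T *v v, R *v p) ` (A \<times> B)"
  have "{gmul d g ` (A \<times> B) | g. g \<in> int_lattice T \<times> int_lattice R} \<subseteq>
      ?coset ` (residue_box N \<times> residue_box M)"
  proof
    fix C assume "C \<in> {gmul d g ` (A \<times> B) | g. g \<in> int_lattice T \<times> int_lattice R}"
    then obtain v p where "C = ?coset (v, p)" "int_vec v" "int_vec p"
      unfolding int_lattice_def by auto
    then show "C \<in> ?coset ` (residue_box N \<times> residue_box M)"
      using coset_representative_in_residue_box[OF H pres N M] by fastforce
  qed
  moreover have "finite (?coset ` (residue_box N \<times> residue_box M))"
    by (intro finite_imageI finite_cartesian_product finite_residue_box)
  ultimately show ?thesis unfolding finite_index_def by (rule finite_subset)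
qed

lemma lat_eq_Times: "lat \<sigma> \<rho> = int_lattice (matrix_inv \<sigma>) \<times> int_lattice \<rho>"
  unfolding lat_def int_lattice_def by blast

lemma finite_index_iff_finite_exponents:
  assumes comp: "G_compatible d \<sigma> \<rho>" and A: "add_subgroup A" and B: "add_subgroup B"
    and H: "G_subgroup d (A \<times> B)"
  shows "finite_index d (lat \<sigma> \<rho>) (A \<times> B) \<longleftrightarrow>
    finite_exponent (int_lattice (matrix_inv \<sigma>)) A \<and> finite_exponent (int_lattice \<rho>) B"
  unfolding lat_eq_Times
proof
  assume fi: "finite_index d (int_lattice (matrix_inv \<sigma>) \<times> int_lattice \<rho>) (A \<times> B)"
  note multiples = finite_index_imp_multiples[OF fi add_subgroup_int_lattice add_subgroup_int_lattice
      add_subgroup_zero[OF A] add_subgroup_zero[OF B]]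
  show "finite_exponent (int_lattice (matrix_inv \<sigma>)) A \<and> finite_exponent (int_lattice \<rho>) B"
    using finite_exponent_int_lattice[OF A multiples(1)[OF column_in_int_lattice]]
      finite_exponent_int_lattice[OF B multiples(2)[OF column_in_int_lattice]] by blast
next
  assume "finite_exponent (int_lattice (matrix_inv \<sigma>)) A \<and> finite_exponent (int_lattice \<rho>) B"
  then show "finite_index d (int_lattice (matrix_inv \<sigma>) \<times> int_lattice \<rho>) (A \<times> B)"
    using finite_exponents_imp_finite_index[OF H eta_preserves_int_lattice[OF comp]] by blast
qed

theorem mainTheorem3:
  fixes d :: "'m::finite \<Rightarrow> real^'n::finite"
    and \<sigma> \<nu> :: "real^'n^'n" and \<rho> \<rr> :: "real^'m^'m"
  assumes mn: "CARD('m) \<le> CARD('n)"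
    and lin_indep: "\<forall>c :: 'm \<Rightarrow> real. (\<Sum>i\<in>UNIV. c i *\<^sub>R d i) = 0 \<longrightarrow> (\<forall>i. c i = 0)"
    and nonsing: "\<forall>i k. d i $ k \<noteq> 0"
    and traceless: "\<forall>i. (\<Sum>k\<in>UNIV. d i $ k) = 0"
    and distinct_entries: "\<forall>i k j. k \<noteq> j \<longrightarrow> d i $ k \<noteq> d i $ j"
    and comp1: "G_compatible d \<sigma> \<rho>"
    and comp2: "G_compatible d \<nu> \<rr>"
  shows "commensurable d (lat \<sigma> \<rho>) (lat \<nu> \<rr>) \<longleftrightarrow>
         (Z_rank (int_lattice (matrix_inv \<sigma>) \<inter> int_lattice (matrix_inv \<nu>)) = CARD('n) \<and>
          Z_rank (int_lattice \<rho> \<inter> int_lattice \<rr>) = CARD('m))"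
proof -
  let ?A = "int_lattice (matrix_inv \<sigma>) \<inter> int_lattice (matrix_inv \<nu>)"
  let ?B = "int_lattice \<rho> \<inter> int_lattice \<rr>"
  have inv: "invertible (matrix_inv \<sigma>)" "invertible (matrix_inv \<nu>)" "invertible \<rho>" "invertible \<rr>"
    using comp1 comp2 invertible_matrix_inv unfolding G_compatible_def by blast+
  have A: "add_subgroup ?A" and B: "add_subgroup ?B"
    by (simp_all add: add_subgroup_Int add_subgroup_int_lattice)
  have H: "G_subgroup d (?A \<times> ?B)"
    using eta_preserves_int_lattice[OF comp1] eta_preserves_int_lattice[OF comp2]
    by (intro G_subgroup_Times[OF A B]) blast
  have lat_Int: "lat \<sigma> \<rho> \<inter> lat \<nu> \<rr> = ?A \<times> ?B"
    unfolding lat_eq_Times by blast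
  have "commensurable d (lat \<sigma> \<rho>) (lat \<nu> \<rr>) \<longleftrightarrow>
      (finite_exponent (int_lattice (matrix_inv \<sigma>)) ?A \<and> finite_exponent (int_lattice \<rho>) ?B) \<and>
      (finite_exponent (int_lattice (matrix_inv \<nu>)) ?A \<and> finite_exponent (int_lattice \<rr>) ?B)"
    unfolding commensurable_def lat_Int finite_index_iff_finite_exponents[OF comp1 A B H]
      finite_index_iff_finite_exponents[OF comp2 A B H] ..
  moreover note
    Z_rank_eq_CARD_iff_finite_exponent[OF inv(1) A Int_lower1]
    Z_rank_eq_CARD_iff_finite_exponent[OF inv(2) A Int_lower2]
    Z_rank_eq_CARD_iff_finite_exponent[OF inv(3) B Int_lower1]
    Z_rank_eq_CARD_iff_finite_exponent[OF inv(4) B Int_lower2]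
  ultimately show ?thesis by blast
qed

end
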